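(* Let $d\ge 1$ and $r\geq 0$. The natural maps $H^r(\Gamma(d,1,n+1);\mathbb{Q})\to H^r(\Gamma(d,1,n);\mathbb{Q})$ are surjective for all $n\ge 1$, and they are isomorphisms for $n\geq 2r$ (so $H^r(\Gamma(d,1,n);\mathbb{Q})$ stabilizes for $n\geq 2r$).
   Context: $G(d,1,n)$ is the group of $n\times n$ monomial matrices with nonzero entries $d$-th roots of unity, acting on $\mathbb{C}^n$, with hyperplane arrangement $\mathcal A$ (hyperplanes $z_i=\zeta z_j$, $i<j$, $\zeta^d=1$, and, for $d>1$, $z_i=0$). With $X=\mathbb{C}^n\setminus\bigcup\mathcal A$, $P=\pi_1(X)$, $B=\pi_1(X/G(d,1,n))$, $\Gamma(d,1,n)=B/[P,P]$, and $H^\bullet(\Gamma(d,1,n);\mathbb{Q})\cong\Lambda^\bullet(\mathbb{Q}\mathcal A)^{G(d,1,n)}$. The natural maps are induced by the inclusion $\Gamma(d,1,n)\hookrightarrow\Gamma(d,1,n+1)$ compatible with $G(d,1,n)\hookrightarrow G(d,1,n+1)$, $M\mapsto\mathrm{diag}(M,1)$; on the exterior algebras they send the $d\log$ forms of hyperplanes not involving $z_{n+1}$ to themselves and the others to $0$. *)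

theory Defs
  imports Complex_Main
begin

text \<open>Vectors of C^n are modelled as functions nat => complex; coordinates are
  0-based (coordinate i corresponds to z_(i+1) of the paper).  A hyperplane is a
  subset of the space nat => complex cut out by one linear equation involving only
  the first n coordinates, so that the arrangement for n is literally contained in
  the arrangement for n+1 (these are exactly the hyperplanes "not involving z_(n+1)").\<close>

definition arrangement :: "nat \<Rightarrow> nat \<Rightarrow> (nat \<Rightarrow> complex) set set" where
  "arrangement d n =
     {{z. z i = \<zeta> * z j} | i j \<zeta>. i < j \<and> j < n \<and> \<zeta> ^ d = 1}
     \<union> (if d > 1 then {{z. z i = 0} | i. i < n} else {})"

definition monomial_group :: "nat \<Rightarrow> nat \<Rightarrow> (nat \<Rightarrow> nat \<Rightarrow> complex) set" where
  "monomial_group d n =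
     {M. (\<forall>i j. (n \<le> i \<or> n \<le> j) \<longrightarrow> M i j = 0)
       \<and> (\<forall>i<n. \<exists>!j. j < n \<and> M i j \<noteq> 0)
       \<and> (\<forall>j<n. \<exists>!i. i < n \<and> M i j \<noteq> 0)
       \<and> (\<forall>i<n. \<forall>j<n. M i j \<noteq> 0 \<longrightarrow> M i j ^ d = 1)}"

definition mat_act :: "nat \<Rightarrow> (nat \<Rightarrow> nat \<Rightarrow> complex) \<Rightarrow> (nat \<Rightarrow> complex) \<Rightarrow> (nat \<Rightarrow> complex)" where
  "mat_act n M z = (\<lambda>i. if i < n then (\<Sum>j<n. M i j * z j) else z i)"

text \<open>Lambda^r(Q A), for A a finite set (the basis), modelled as alternating
  r-tensors: an element  sum c(H_1..H_r) dlog H_1 (x) ... (x) dlog H_r  is given by its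
  coefficient function c on lists of length r of elements of A, which is alternating.\<close>

definition ext_power :: "'a set \<Rightarrow> nat \<Rightarrow> ('a list \<Rightarrow> rat) set" where
  "ext_power A r =
     {c. (\<forall>xs. c xs \<noteq> 0 \<longrightarrow> length xs = r \<and> set xs \<subseteq> A)
       \<and> (\<forall>xs. \<not> distinct xs \<longrightarrow> c xs = 0)
       \<and> (\<forall>xs i j. i < length xs \<longrightarrow> j < length xs \<longrightarrow> i \<noteq> j \<longrightarrow>
              c (xs[i := xs ! j, j := xs ! i]) = - c xs)}"

text \<open>H^r(Gamma(d,1,n); Q) = Lambda^r(Q A)^{G(d,1,n)}; G acts on dlog forms by
  permuting hyperplanes (g . dlog alpha_H = dlog alpha_{gH}).\<close>

definition cohom :: "nat \<Rightarrow> nat \<Rightarrow> nat \<Rightarrow> (((nat \<Rightarrow> complex) set) list \<Rightarrow> rat) set" where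
  "cohom d n r =
     {c \<in> ext_power (arrangement d n) r.
        \<forall>M \<in> monomial_group d n. \<forall>xs. c (map (\<lambda>H. mat_act n M ` H) xs) = c xs}"

text \<open>The natural map H^r(Gamma(d,1,n+1)) -> H^r(Gamma(d,1,n)): dlog forms of
  hyperplanes of the n-arrangement go to themselves, the others to 0.\<close>

definition natural_map :: "nat \<Rightarrow> nat \<Rightarrow> (((nat \<Rightarrow> complex) set) list \<Rightarrow> rat)
     \<Rightarrow> (((nat \<Rightarrow> complex) set) list \<Rightarrow> rat)" where
  "natural_map d n c = (\<lambda>xs. if set xs \<subseteq> arrangement d n then c xs else 0)"

end

theory Submission
  imports Defs "HOL-Combinatorics.Permutations"
begin

text \<open>Surjectivity: an invariant c of level n extends to level n+1 by c'(xs) = c(g xs) for any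
  g \<in> G(d,1,n+1) moving all hyperplanes of xs into A(n), and c'(xs) = 0 if there is no such g.
  This is well defined because an element of G(d,1,n+1) mapping hyperplanes of A(n) into A(n)
  acts on them like an element of G(d,1,n): composing its permutation with a transposition so
  that it fixes the last coordinate does not change the image of a hyperplane not involving that
  coordinate when the image does not involve it either.

  Injectivity for n \<ge> 2r: r hyperplanes involve at most 2r \<le> n of the n+1 coordinates, so
  transposing an unused coordinate with the last one moves all of them into A(n), where two
  invariants with the same restriction agree.\<close>

definition alternating :: "('a list \<Rightarrow> 'b::group_add) \<Rightarrow> bool" where
  "alternating c \<longleftrightarrow>
     (\<forall>xs. \<not> distinct xs \<longrightarrow> c xs = 0) \<and>
     (\<forall>xs i j. i < length xs \<longrightarrow> j < length xs \<longrightarrow> i \<noteq> j \<longrightarrow>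
        c (xs[i := xs ! j, j := xs ! i]) = - c xs)"

lemma alternating_swap:
  "alternating c \<Longrightarrow> i < length xs \<Longrightarrow> j < length xs \<Longrightarrow> i \<noteq> j \<Longrightarrow>
     c (xs[i := xs ! j, j := xs ! i]) = - c xs"
  unfolding alternating_def by blast

lemma ext_power_iff:
  "c \<in> ext_power A r \<longleftrightarrow> (\<forall>xs. c xs \<noteq> 0 \<longrightarrow> length xs = r \<and> set xs \<subseteq> A) \<and> alternating c"
  unfolding ext_power_def alternating_def by blast

lemma alternating_zero: "alternating (\<lambda>_. 0)"
  by (simp add: alternating_def)

lemma alternating_map:
  fixes f :: "'a \<Rightarrow> 'b" and c :: "'b list \<Rightarrow> 'c::group_add"
  assumes "alternating c"
  shows "alternating (\<lambda>xs. c (map f xs))"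
  unfolding alternating_def
proof (intro conjI allI impI)
  fix xs :: "'a list" assume "\<not> distinct xs"
  then show "c (map f xs) = 0"
    using assms distinct_map by (auto simp: alternating_def)
next
  fix xs :: "'a list" and i j assume ij: "i < length xs" "j < length xs" "i \<noteq> j"
  have swap: "c ((map f xs)[i := map f xs ! j, j := map f xs ! i]) = - c (map f xs)"
    using ij by (intro alternating_swap[OF assms]) simp_all
  have "map f (xs[i := xs ! j, j := xs ! i]) = (map f xs)[i := map f xs ! j, j := map f xs ! i]"
    using ij by (simp add: map_update)
  with swap show "c (map f (xs[i := xs ! j, j := xs ! i])) = - c (map f xs)"
    by (simp only:)
qed

lemma alternating_set_indexed:
  assumes "\<And>S. alternating (\<phi> S)"
  shows "alternating (\<lambda>xs. \<phi> (set xs) xs)"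
  using assms by (simp add: alternating_def)

lemma ext_power_restrict:
  assumes "c \<in> ext_power A r"
  shows "(\<lambda>xs. if set xs \<subseteq> B then c xs else 0) \<in> ext_power B r"
proof -
  define \<phi> where "\<phi> S = (if S \<subseteq> B then c else (\<lambda>_. 0))" for S
  have "alternating (\<lambda>xs. \<phi> (set xs) xs)"
  proof (rule alternating_set_indexed)
    fix S
    show "alternating (\<phi> S)"
      using assms by (simp add: \<phi>_def ext_power_iff alternating_zero)
  qed
  moreover have "(\<lambda>xs. \<phi> (set xs) xs) = (\<lambda>xs. if set xs \<subseteq> B then c xs else 0)"
    by (simp add: \<phi>_def fun_eq_iff)
  ultimately show ?thesis
    using assms by (simp add: ext_power_iff)
qed

definition monomial_map ::
    "nat \<Rightarrow> (nat \<Rightarrow> nat) \<Rightarrow> (nat \<Rightarrow> complex) \<Rightarrow> (nat \<Rightarrow> complex) \<Rightarrow> nat \<Rightarrow> complex" where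
  "monomial_map m p t z = (\<lambda>i. if i < m then t i * z (p i) else z i)"

definition monomial_maps :: "nat \<Rightarrow> nat \<Rightarrow> ((nat \<Rightarrow> complex) \<Rightarrow> nat \<Rightarrow> complex) set" where
  "monomial_maps d m = {monomial_map m p t | p t. p permutes {..<m} \<and> (\<forall>i<m. t i ^ d = 1)}"

lemma monomial_mapsI:
  "p permutes {..<m} \<Longrightarrow> (\<And>i. i < m \<Longrightarrow> t i ^ d = 1) \<Longrightarrow> monomial_map m p t \<in> monomial_maps d m"
  unfolding monomial_maps_def by blast

lemma monomial_mapsE:
  assumes "g \<in> monomial_maps d m"
  obtains p t where "g = monomial_map m p t" "p permutes {..<m}" "\<And>i. i < m \<Longrightarrow> t i ^ d = 1"
  using assms unfolding monomial_maps_def by blast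

lemma root_of_unity_nonzero: "(x::complex) ^ d = 1 \<Longrightarrow> 1 \<le> d \<Longrightarrow> x \<noteq> 0"
  by (cases d) auto

lemma monomial_map_comp:
  assumes "p1 permutes {..<m}"
  shows "monomial_map m p1 t1 \<circ> monomial_map m p2 t2 = monomial_map m (p2 \<circ> p1) (\<lambda>i. t1 i * t2 (p1 i))"
  using permutes_in_image[OF assms] by (auto simp: monomial_map_def fun_eq_iff)

lemma monomial_maps_comp:
  assumes "f \<in> monomial_maps d m" "g \<in> monomial_maps d m"
  shows "f \<circ> g \<in> monomial_maps d m"
proof -
  obtain p1 t1 where f: "f = monomial_map m p1 t1" "p1 permutes {..<m}" "\<And>i. i < m \<Longrightarrow> t1 i ^ d = 1"
    using assms(1) by (elim monomial_mapsE) blast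
  obtain p2 t2 where g: "g = monomial_map m p2 t2" "p2 permutes {..<m}" "\<And>i. i < m \<Longrightarrow> t2 i ^ d = 1"
    using assms(2) by (elim monomial_mapsE) blast
  have "(t1 i * t2 (p1 i)) ^ d = 1" if "i < m" for i
    using that f(3) g(3) permutes_in_image[OF f(2)] by (simp add: power_mult_distrib)
  then show ?thesis
    unfolding f(1) g(1) monomial_map_comp[OF f(2)]
    by (intro monomial_mapsI permutes_compose f(2) g(2))
qed

lemma id_in_monomial_maps: "id \<in> monomial_maps d m"
proof -
  have "id = monomial_map m id (\<lambda>_. 1)"
    by (simp add: monomial_map_def fun_eq_iff)
  then show ?thesis
    by (metis monomial_mapsI permutes_id power_one)
qed

lemma monomial_maps_Suc: "monomial_maps d m \<subseteq> monomial_maps d (Suc m)"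
proof
  fix g assume "g \<in> monomial_maps d m"
  then obtain p t where g: "g = monomial_map m p t" "p permutes {..<m}" "\<And>i. i < m \<Longrightarrow> t i ^ d = 1"
    by (elim monomial_mapsE) blast
  have "g = monomial_map (Suc m) p (t(m := 1))"
    using permutes_not_in[OF g(2), of m] by (auto simp: g(1) monomial_map_def fun_eq_iff less_Suc_eq)
  moreover have "p permutes {..<Suc m}"
    using g(2) by (rule permutes_subset) auto
  ultimately show "g \<in> monomial_maps d (Suc m)"
    using g(3) by (auto intro!: monomial_mapsI simp: less_Suc_eq)
qed

lemma monomial_maps_inverse:
  assumes "1 \<le> d" "g \<in> monomial_maps d m"
  obtains g' where "g' \<in> monomial_maps d m" "g' \<circ> g = id" "g \<circ> g' = id"
proof -
  obtain p t where g: "g = monomial_map m p t" "p permutes {..<m}" "\<And>i. i < m \<Longrightarrow> t i ^ d = 1"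
    using assms(2) by (elim monomial_mapsE) blast
  have t_nonzero: "t i \<noteq> 0" if "i < m" for i
    using g(3)[OF that] assms(1) by (rule root_of_unity_nonzero)
  have in_range: "inv p i < m" "p i < m" if "i < m" for i
    using that permutes_in_image[OF permutes_inv[OF g(2)]] permutes_in_image[OF g(2)] by auto
  define g' where "g' = monomial_map m (inv p) (\<lambda>j. 1 / t (inv p j))"
  have "g' \<in> monomial_maps d m"
    unfolding g'_def using g(3) in_range
    by (intro monomial_mapsI permutes_inv[OF g(2)]) (simp add: power_divide)
  moreover have "g' \<circ> g = id" "g \<circ> g' = id"
    by (auto simp: fun_eq_iff g'_def g(1) monomial_map_def in_range t_nonzero permutes_inverses[OF g(2)])
  ultimately show ?thesis
    using that by blast
qed

lemma monomial_maps_bij: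
  assumes "1 \<le> d" "g \<in> monomial_maps d m"
  shows "bij g"
  using assms by (metis monomial_maps_inverse o_bij)

lemma inv_in_monomial_maps:
  assumes "1 \<le> d" "g \<in> monomial_maps d m"
  shows "inv g \<in> monomial_maps d m"
  using assms by (metis monomial_maps_inverse inv_unique_comp)

lemma mat_act_in_monomial_maps:
  assumes "M \<in> monomial_group d m"
  shows "mat_act m M \<in> monomial_maps d m"
proof -
  have row: "\<And>i. i < m \<Longrightarrow> \<exists>!j. j < m \<and> M i j \<noteq> 0"
    and col: "\<And>j. j < m \<Longrightarrow> \<exists>!i. i < m \<and> M i j \<noteq> 0"
    and root: "\<And>i j. i < m \<Longrightarrow> j < m \<Longrightarrow> M i j \<noteq> 0 \<Longrightarrow> M i j ^ d = 1"
    using assms unfolding monomial_group_def by simp_all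
  define p where "p i = (if i < m then THE j. j < m \<and> M i j \<noteq> 0 else i)" for i
  have p: "p i < m" "M i (p i) \<noteq> 0" if "i < m" for i
    using theI'[OF row[OF that]] that by (simp_all add: p_def)
  have p_unique: "j = p i" if "i < m" "j < m" "M i j \<noteq> 0" for i j
    using row[OF that(1)] p[OF that(1)] that(2,3) by blast
  have "inj_on p {..<m}"
  proof (rule inj_onI)
    fix i i' assume "i \<in> {..<m}" "i' \<in> {..<m}" "p i = p i'"
    then show "i = i'"
      using col[of "p i"] p[of i] p[of i'] by auto
  qed
  moreover have "p ` {..<m} \<subseteq> {..<m}"
    using p by auto
  ultimately have "bij_betw p {..<m} {..<m}"
    by (simp add: bij_betw_def endo_inj_surj)
  then have perm: "p permutes {..<m}"
    by (rule bij_imp_permutes) (simp add: p_def)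
  have "mat_act m M = monomial_map m p (\<lambda>i. M i (p i))"
  proof (intro ext)
    fix z i
    show "mat_act m M z i = monomial_map m p (\<lambda>i. M i (p i)) z i"
    proof (cases "i < m")
      case True
      then have "(\<Sum>j<m. M i j * z j) = (\<Sum>j<m. if j = p i then M i (p i) * z (p i) else 0)"
        using p_unique by (intro sum.cong) auto
      with True p show ?thesis
        by (simp add: mat_act_def monomial_map_def)
    qed (simp add: mat_act_def monomial_map_def)
  qed
  moreover have "M i (p i) ^ d = 1" if "i < m" for i
    using root p that by blast
  ultimately show ?thesis
    using perm by (simp add: monomial_mapsI)
qed

lemma monomial_maps_in_mat_act:
  assumes "1 \<le> d" "g \<in> monomial_maps d m"
  shows "g \<in> mat_act m ` monomial_group d m"
proof -
  obtain p t where g: "g = monomial_map m p t" "p permutes {..<m}" "\<And>i. i < m \<Longrightarrow> t i ^ d = 1"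
    using assms(2) by (elim monomial_mapsE) blast
  have in_range: "p i < m" "inv p i < m" if "i < m" for i
    using that permutes_in_image[OF g(2)] permutes_in_image[OF permutes_inv[OF g(2)]] by auto
  have t_nonzero: "t i \<noteq> 0" if "i < m" for i
    using g(3)[OF that] assms(1) by (rule root_of_unity_nonzero)
  define M where "M i j = (if i < m \<and> j < m \<and> j = p i then t i else 0)" for i j
  have "\<exists>!j. j < m \<and> M i j \<noteq> 0" if "i < m" for i
    using that by (intro ex1I[of _ "p i"]) (auto simp: M_def in_range t_nonzero split: if_splits)
  moreover have "\<exists>!i. i < m \<and> M i j \<noteq> 0" if "j < m" for j
    using that by (intro ex1I[of _ "inv p j"])
      (auto simp: M_def in_range t_nonzero permutes_inverses[OF g(2)] split: if_splits)
  ultimately have "M \<in> monomial_group d m"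
    using g(3) by (auto simp: monomial_group_def M_def)
  moreover have "mat_act m M = g"
  proof (intro ext)
    fix z i
    show "mat_act m M z i = g z i"
    proof (cases "i < m")
      case True
      then have "(\<Sum>j<m. M i j * z j) = (\<Sum>j<m. if j = p i then t i * z (p i) else 0)"
        by (intro sum.cong) (auto simp: M_def)
      with True in_range show ?thesis
        by (simp add: mat_act_def monomial_map_def g(1))
    qed (simp add: mat_act_def monomial_map_def g(1))
  qed
  ultimately show ?thesis
    by blast
qed

lemma mat_act_monomial_group:
  "1 \<le> d \<Longrightarrow> mat_act m ` monomial_group d m = monomial_maps d m"
  using mat_act_in_monomial_maps monomial_maps_in_mat_act by blast

lemma cohom_iff:
  assumes "1 \<le> d"
  shows "c \<in> cohom d n r \<longleftrightarrow> c \<in> ext_power (arrangement d n) r \<and>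
           (\<forall>g \<in> monomial_maps d n. \<forall>xs. c (map ((`) g) xs) = c xs)"
  unfolding cohom_def mat_act_monomial_group[OF assms, symmetric] by auto

lemma cohom_support:
  "c \<in> cohom d n r \<Longrightarrow> c xs \<noteq> 0 \<Longrightarrow> length xs = r \<and> set xs \<subseteq> arrangement d n"
  unfolding cohom_def ext_power_def by blast

lemma arrangement_ratioI:
  "i < j \<Longrightarrow> j < m \<Longrightarrow> \<zeta> ^ d = 1 \<Longrightarrow> {z. z i = \<zeta> * z j} \<in> arrangement d m"
  unfolding arrangement_def by blast

lemma arrangement_coordI:
  "1 < d \<Longrightarrow> i < m \<Longrightarrow> {z. z i = 0} \<in> arrangement d m"
  unfolding arrangement_def by auto

lemma arrangementE:
  assumes "H \<in> arrangement d m"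
  obtains (ratio) i j \<zeta> where "H = {z. z i = \<zeta> * z j}" "i < j" "j < m" "\<zeta> ^ d = 1"
    | (coord) i where "1 < d" "H = {z. z i = 0}" "i < m"
  using assms unfolding arrangement_def by (auto split: if_splits)

lemma arrangement_mono: "arrangement d m \<subseteq> arrangement d (Suc m)"
  by (auto elim!: arrangementE intro: arrangement_ratioI arrangement_coordI)

lemma vimage_monomial_map_arrangement:
  assumes "1 \<le> d" "g \<in> monomial_maps d m" "H \<in> arrangement d m"
  shows "g -` H \<in> arrangement d m"
proof -
  obtain p t where g: "g = monomial_map m p t" "p permutes {..<m}" "\<And>i. i < m \<Longrightarrow> t i ^ d = 1"
    using assms(2) by (elim monomial_mapsE) blast
  have p_less: "p i < m" if "i < m" for i
    using permutes_in_image[OF g(2)] that by auto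
  have t_nonzero: "t i \<noteq> 0" if "i < m" for i
    using g(3)[OF that] assms(1) by (rule root_of_unity_nonzero)
  from assms(3) show ?thesis
  proof (cases rule: arrangementE)
    case (ratio i j \<zeta>)
    define \<xi> where "\<xi> = \<zeta> * t j / t i"
    have "\<xi> ^ d = 1" "\<xi> \<noteq> 0"
      using ratio g(3) t_nonzero root_of_unity_nonzero[OF _ assms(1)]
      by (simp_all add: \<xi>_def power_mult_distrib power_divide)
    have "p i \<noteq> p j"
      using ratio permutes_inj[OF g(2)] by (auto dest: injD)
    have eq: "g -` H = {w. w (p i) = \<xi> * w (p j)}"
      using ratio t_nonzero by (auto simp: g(1) monomial_map_def \<xi>_def field_simps)
    show ?thesis
    proof (cases "p i < p j")
      case True
      then show ?thesis
        unfolding eq using ratio p_less \<open>\<xi> ^ d = 1\<close> by (intro arrangement_ratioI) auto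
    next
      case False
      have eq': "g -` H = {w. w (p j) = (1 / \<xi>) * w (p i)}"
        unfolding eq using \<open>\<xi> \<noteq> 0\<close> by (auto simp: field_simps)
      show ?thesis
        unfolding eq' using False \<open>p i \<noteq> p j\<close> ratio p_less \<open>\<xi> ^ d = 1\<close>
        by (intro arrangement_ratioI) (auto simp: power_divide)
    qed
  next
    case (coord i)
    then have "g -` H = {w. w (p i) = 0}"
      using t_nonzero by (auto simp: g(1) monomial_map_def)
    then show ?thesis
      using coord p_less by (simp add: arrangement_coordI)
  qed
qed

lemma image_monomial_map_arrangement_iff:
  assumes "1 \<le> d" "g \<in> monomial_maps d m"
  shows "g ` H \<in> arrangement d m \<longleftrightarrow> H \<in> arrangement d m"
proof -
  have "bij g" "inv g \<in> monomial_maps d m"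
    using monomial_maps_bij[OF assms] inv_in_monomial_maps[OF assms] .
  moreover have "g ` H = inv g -` H"
    using \<open>bij g\<close> by (simp add: bij_vimage_eq_inv_image bij_imp_bij_inv inv_inv_eq)
  ultimately show ?thesis
    using assms vimage_monomial_map_arrangement inj_vimage_image_eq[OF bij_is_inj]
    by metis
qed

definition depends_only_on :: "nat set \<Rightarrow> (nat \<Rightarrow> complex) set \<Rightarrow> bool" where
  "depends_only_on D H \<longleftrightarrow> (\<forall>z z'. (\<forall>i\<in>D. z i = z' i) \<longrightarrow> z \<in> H \<longrightarrow> z' \<in> H)"

lemma depends_only_onD:
  "depends_only_on D H \<Longrightarrow> (\<And>i. i \<in> D \<Longrightarrow> z i = z' i) \<Longrightarrow> z \<in> H \<longleftrightarrow> z' \<in> H"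
  unfolding depends_only_on_def by (metis (mono_tags))

lemma depends_only_on_mono: "depends_only_on D H \<Longrightarrow> D \<subseteq> E \<Longrightarrow> depends_only_on E H"
  unfolding depends_only_on_def by blast

lemma depends_only_on_vimage_monomial_map:
  assumes "D \<subseteq> {..<m}" "depends_only_on D H"
  shows "depends_only_on (p ` D) (monomial_map m p t -` H)"
  unfolding depends_only_on_def
proof (intro allI impI)
  fix z z' assume "\<forall>i\<in>p ` D. z i = z' i" "z \<in> monomial_map m p t -` H"
  moreover have "monomial_map m p t z i = monomial_map m p t z' i" if "i \<in> D" for i
    using that assms(1) \<open>\<forall>i\<in>p ` D. z i = z' i\<close> by (auto simp: monomial_map_def)
  ultimately show "z' \<in> monomial_map m p t -` H"
    using depends_only_onD[OF assms(2)] by blast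
qed

lemma arrangement_depends_on_two:
  assumes "H \<in> arrangement d m"
  obtains a b where "a < m" "b < m" "depends_only_on {a, b} H"
  using assms
proof (cases rule: arrangementE)
  case (ratio i j \<zeta>)
  then show ?thesis
    using that[of i j] by (auto simp: depends_only_on_def)
next
  case (coord i)
  then show ?thesis
    using that[of i i] by (auto simp: depends_only_on_def)
qed

lemma arrangement_depends_on_lessThan:
  assumes "H \<in> arrangement d m"
  shows "depends_only_on {..<m} H"
  using assms by (elim arrangement_depends_on_two) (auto elim: depends_only_on_mono)

lemma arrangement_iff_Suc:
  assumes "1 \<le> d"
  shows "H \<in> arrangement d n \<longleftrightarrow> H \<in> arrangement d (Suc n) \<and> depends_only_on {..<n} H"
proof (intro iffI conjI)
  assume H: "H \<in> arrangement d (Suc n) \<and> depends_only_on {..<n} H"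
  let ?e = "(\<lambda>_. 0)(n := 1) :: nat \<Rightarrow> complex"
  have "(\<lambda>_. 0) \<in> H \<longleftrightarrow> ?e \<in> H"
    using H by (intro depends_only_onD) auto
  from H have "H \<in> arrangement d (Suc n)" ..
  then show "H \<in> arrangement d n"
  proof (cases rule: arrangementE)
    case (ratio i j \<zeta>)
    with \<open>(\<lambda>_. 0) \<in> H \<longleftrightarrow> ?e \<in> H\<close> have "j \<noteq> n"
      using root_of_unity_nonzero[OF _ assms] by auto
    then show ?thesis
      using ratio by (auto intro: arrangement_ratioI)
  next
    case (coord i)
    with \<open>(\<lambda>_. 0) \<in> H \<longleftrightarrow> ?e \<in> H\<close> have "i \<noteq> n"
      by auto
    then show ?thesis
      using coord by (auto intro: arrangement_coordI)
  qed
qed (use arrangement_mono arrangement_depends_on_lessThan in auto)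

lemma monomial_map_Suc_restrict:
  assumes "1 \<le> d" "h \<in> monomial_maps d (Suc n)"
  obtains h' where "h' \<in> monomial_maps d n"
    "\<And>H. H \<in> arrangement d n \<Longrightarrow> h ` H \<in> arrangement d n \<Longrightarrow> h' ` H = h ` H"
proof -
  obtain p t where h: "h = monomial_map (Suc n) p t" "p permutes {..<Suc n}"
    "\<And>i. i < Suc n \<Longrightarrow> t i ^ d = 1"
    using assms(2) by (elim monomial_mapsE) blast
  define q where "q = p n"
  define h' where "h' = monomial_map n (transpose q n \<circ> p) t"
  have "transpose q n \<circ> p permutes {..<Suc n}"
    using h(2) permutes_in_image[OF h(2), of n]
    by (intro permutes_compose permutes_swap_id) (auto simp: q_def)
  then have perm': "transpose q n \<circ> p permutes {..<n}"
    by (rule permutes_superset) (auto simp: q_def)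
  then have h': "h' \<in> monomial_maps d n"
    unfolding h'_def using h(3) by (intro monomial_mapsI) auto
  have p_ne_q: "p i \<noteq> q" if "i < n" for i
    using that permutes_inj[OF h(2)] unfolding q_def by (metis inj_eq less_irrefl)
  have "h' ` H = h ` H" if H: "H \<in> arrangement d n" "h ` H \<in> arrangement d n" for H
  proof -
    have "h' z \<in> h ` H \<longleftrightarrow> z \<in> H" for z
    proof -
      define z' where "z' = z(n := z q)"
      have "h z' \<in> h ` H \<longleftrightarrow> z' \<in> H"
        using monomial_maps_bij[OF assms] by (simp add: bij_is_inj inj_image_mem_iff)
      also have "z' \<in> H \<longleftrightarrow> z \<in> H"
        using arrangement_depends_on_lessThan[OF H(1)] by (rule depends_only_onD) (simp add: z'_def)
      finally have "h z' \<in> h ` H \<longleftrightarrow> z \<in> H" .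
      moreover have "h z' i = h' z i" if "i < n" for i
        using that p_ne_q[OF that] by (auto simp: h(1) h'_def monomial_map_def z'_def transpose_def)
      ultimately show ?thesis
        using depends_only_onD[OF arrangement_depends_on_lessThan[OF H(2)], of "h z'" "h' z"] by simp
    qed
    then have "h' -` (h ` H) = H"
      by blast
    then show ?thesis
      using surj_image_vimage_eq[OF bij_is_surj[OF monomial_maps_bij[OF assms(1) h']]] by metis
  qed
  with h' that show ?thesis
    by blast
qed

lemma cohom_invariant_Suc:
  assumes "1 \<le> d" "c \<in> cohom d n r" "h \<in> monomial_maps d (Suc n)"
    and "set ys \<subseteq> arrangement d n" "\<forall>H \<in> set ys. h ` H \<in> arrangement d n"
  shows "c (map ((`) h) ys) = c ys"
proof -
  obtain h' where h': "h' \<in> monomial_maps d n"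
    "\<And>H. H \<in> arrangement d n \<Longrightarrow> h ` H \<in> arrangement d n \<Longrightarrow> h' ` H = h ` H"
    using monomial_map_Suc_restrict[OF assms(1,3)] by blast
  have "map ((`) h) ys = map ((`) h') ys"
    using assms(4,5) h'(2) by (intro map_cong refl) (simp add: subsetD)
  also have "c (map ((`) h') ys) = c ys"
    using assms(2) h'(1) by (simp add: cohom_iff[OF assms(1)])
  finally show ?thesis .
qed

definition reducing_maps :: "nat \<Rightarrow> nat \<Rightarrow> (nat \<Rightarrow> complex) set set
    \<Rightarrow> ((nat \<Rightarrow> complex) \<Rightarrow> nat \<Rightarrow> complex) set" where
  "reducing_maps d n S = {g \<in> monomial_maps d (Suc n). \<forall>H \<in> S. g ` H \<in> arrangement d n}"

text \<open>The choice of g is irrelevant by \<open>cohom_reducing_maps_eq\<close> below.\<close>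

definition extend_cohom :: "nat \<Rightarrow> nat \<Rightarrow> ((nat \<Rightarrow> complex) set list \<Rightarrow> rat)
    \<Rightarrow> (nat \<Rightarrow> complex) set list \<Rightarrow> rat" where
  "extend_cohom d n c xs =
     (if reducing_maps d n (set xs) = {} then 0
      else c (map ((`) (SOME g. g \<in> reducing_maps d n (set xs))) xs))"

lemma cohom_reducing_maps_eq:
  assumes "1 \<le> d" "c \<in> cohom d n r"
    and "g1 \<in> reducing_maps d n (set xs)" "g2 \<in> reducing_maps d n (set xs)"
  shows "c (map ((`) g1) xs) = c (map ((`) g2) xs)"
proof -
  have g: "g1 \<in> monomial_maps d (Suc n)" "g2 \<in> monomial_maps d (Suc n)"
    using assms(3,4) by (simp_all add: reducing_maps_def)
  define h where "h = g2 \<circ> inv g1"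
  have "h \<in> monomial_maps d (Suc n)"
    unfolding h_def using assms(1) g by (intro monomial_maps_comp inv_in_monomial_maps)
  moreover have img: "h ` (g1 ` H) = g2 ` H" for H
    using bij_is_inj[OF monomial_maps_bij[OF assms(1) g(1)]] by (simp add: h_def image_comp)
  ultimately have "c (map ((`) g1) xs) = c (map ((`) h) (map ((`) g1) xs))"
    using assms by (intro cohom_invariant_Suc[symmetric]) (auto simp: reducing_maps_def)
  also have "map ((`) h) (map ((`) g1) xs) = map ((`) g2) xs"
    using img by simp
  finally show ?thesis .
qed

lemma extend_cohom_eq:
  assumes "1 \<le> d" "c \<in> cohom d n r" "g \<in> reducing_maps d n (set xs)"
  shows "extend_cohom d n c xs = c (map ((`) g) xs)"
proof -
  have "(SOME g. g \<in> reducing_maps d n (set xs)) \<in> reducing_maps d n (set xs)"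
    using assms(3) some_in_eq by blast
  then show ?thesis
    using assms cohom_reducing_maps_eq unfolding extend_cohom_def by auto
qed

lemma reducing_maps_image:
  assumes "1 \<le> d" "f \<in> monomial_maps d (Suc n)"
  shows "reducing_maps d n ((`) f ` S) = {} \<longleftrightarrow> reducing_maps d n S = {}"
    and "g \<in> reducing_maps d n S \<Longrightarrow> g \<circ> inv f \<in> reducing_maps d n ((`) f ` S)"
proof -
  have inj: "inj f"
    using monomial_maps_bij[OF assms] by (rule bij_is_inj)
  show g: "g \<circ> inv f \<in> reducing_maps d n ((`) f ` S)" if "g \<in> reducing_maps d n S" for g
  proof -
    have "g \<circ> inv f \<in> monomial_maps d (Suc n)"
      using that assms by (intro monomial_maps_comp inv_in_monomial_maps) (simp_all add: reducing_maps_def)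
    then show ?thesis
      using that inj by (simp add: reducing_maps_def image_comp)
  qed
  have "g \<circ> f \<in> reducing_maps d n S" if "g \<in> reducing_maps d n ((`) f ` S)" for g
    using that assms by (auto simp: reducing_maps_def image_comp intro: monomial_maps_comp)
  with g show "reducing_maps d n ((`) f ` S) = {} \<longleftrightarrow> reducing_maps d n S = {}"
    by blast
qed

lemma extend_cohom_invariant:
  assumes "1 \<le> d" "c \<in> cohom d n r" "f \<in> monomial_maps d (Suc n)"
  shows "extend_cohom d n c (map ((`) f) xs) = extend_cohom d n c xs"
proof (cases "reducing_maps d n (set xs) = {}")
  case True
  then show ?thesis
    using reducing_maps_image(1)[OF assms(1,3)] by (simp add: extend_cohom_def)
next
  case False
  then obtain g where g: "g \<in> reducing_maps d n (set xs)"
    by blast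
  have "inj f"
    using monomial_maps_bij[OF assms(1,3)] by (rule bij_is_inj)
  then have "map ((`) (g \<circ> inv f)) (map ((`) f) xs) = map ((`) g) xs"
    by (simp add: image_comp)
  moreover have "g \<circ> inv f \<in> reducing_maps d n (set (map ((`) f) xs))"
    using reducing_maps_image(2)[OF assms(1,3) g] by simp
  ultimately show ?thesis
    using extend_cohom_eq[OF assms(1,2)] g by metis
qed

lemma extend_cohom_support:
  assumes "1 \<le> d" "c \<in> cohom d n r" "extend_cohom d n c xs \<noteq> 0"
  shows "length xs = r \<and> set xs \<subseteq> arrangement d (Suc n)"
proof -
  have "reducing_maps d n (set xs) \<noteq> {}"
    using assms(3) by (auto simp: extend_cohom_def)
  then obtain g where g: "g \<in> reducing_maps d n (set xs)"
    by blast
  then have "c (map ((`) g) xs) \<noteq> 0"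
    using assms(3) extend_cohom_eq[OF assms(1,2)] by simp
  then have "length xs = r"
    using cohom_support[OF assms(2)] by (metis length_map)
  moreover have "H \<in> arrangement d (Suc n)" if "H \<in> set xs" for H
  proof -
    have "g \<in> monomial_maps d (Suc n)" "g ` H \<in> arrangement d (Suc n)"
      using g that arrangement_mono by (auto simp: reducing_maps_def)
    then show ?thesis
      using image_monomial_map_arrangement_iff[OF assms(1)] by blast
  qed
  ultimately show ?thesis
    by blast
qed

lemma alternating_extend_cohom:
  assumes "c \<in> cohom d n r"
  shows "alternating (extend_cohom d n c)"
proof -
  define \<phi> where "\<phi> S = (if reducing_maps d n S = {} then (\<lambda>_. 0)
    else (\<lambda>xs. c (map ((`) (SOME g. g \<in> reducing_maps d n S)) xs)))" for S
  have "alternating (\<lambda>xs. \<phi> (set xs) xs)"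
  proof (rule alternating_set_indexed)
    fix S
    show "alternating (\<phi> S)"
      using assms by (simp add: \<phi>_def cohom_def ext_power_iff alternating_zero alternating_map)
  qed
  moreover have "extend_cohom d n c = (\<lambda>xs. \<phi> (set xs) xs)"
    unfolding extend_cohom_def \<phi>_def by (rule ext) simp
  ultimately show ?thesis
    by simp
qed

lemma extend_cohom_in_cohom:
  assumes "1 \<le> d" "c \<in> cohom d n r"
  shows "extend_cohom d n c \<in> cohom d (Suc n) r"
  using extend_cohom_support[OF assms] alternating_extend_cohom[OF assms(2)]
    extend_cohom_invariant[OF assms]
  by (simp add: cohom_iff[OF assms(1)] ext_power_iff)

lemma natural_map_extend_cohom:
  assumes "1 \<le> d" "c \<in> cohom d n r"
  shows "natural_map d n (extend_cohom d n c) = c"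
proof
  fix xs
  show "natural_map d n (extend_cohom d n c) xs = c xs"
  proof (cases "set xs \<subseteq> arrangement d n")
    case True
    then have "id \<in> reducing_maps d n (set xs)"
      by (auto simp: reducing_maps_def id_in_monomial_maps)
    with True show ?thesis
      using extend_cohom_eq[OF assms] by (simp add: natural_map_def)
  next
    case False
    then show ?thesis
      using cohom_support[OF assms(2), of xs] by (auto simp: natural_map_def)
  qed
qed

lemma natural_map_in_cohom:
  assumes "1 \<le> d" "c \<in> cohom d (Suc n) r"
  shows "natural_map d n c \<in> cohom d n r"
proof -
  have "natural_map d n c \<in> ext_power (arrangement d n) r"
    using assms unfolding natural_map_def cohom_iff[OF assms(1)] by (intro ext_power_restrict) blast
  moreover have "natural_map d n c (map ((`) g) xs) = natural_map d n c xs"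
    if g: "g \<in> monomial_maps d n" for g xs
  proof -
    have "set (map ((`) g) xs) \<subseteq> arrangement d n \<longleftrightarrow> set xs \<subseteq> arrangement d n"
      using image_monomial_map_arrangement_iff[OF assms(1) g] by auto
    moreover have "g \<in> monomial_maps d (Suc n)"
      using g monomial_maps_Suc by blast
    then have "c (map ((`) g) xs) = c xs"
      using assms by (simp add: cohom_iff)
    ultimately show ?thesis
      by (simp add: natural_map_def)
  qed
  ultimately show ?thesis
    using assms(1) by (simp add: cohom_iff)
qed

lemma reducing_maps_nonempty:
  assumes "1 \<le> d" "set xs \<subseteq> arrangement d (Suc n)" "2 * length xs \<le> n"
  shows "reducing_maps d n (set xs) \<noteq> {}"
proof -
  have "\<forall>H \<in> set xs. \<exists>a b. a < Suc n \<and> b < Suc n \<and> depends_only_on {a, b} H"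
    using assms(2) by (metis arrangement_depends_on_two subsetD)
  then obtain a b where ab: "\<And>H. H \<in> set xs \<Longrightarrow>
      a H < Suc n \<and> b H < Suc n \<and> depends_only_on {a H, b H} H"
    by metis
  define U where "U = (\<Union>H \<in> set xs. {a H, b H})"
  have "card U \<le> (\<Sum>H \<in> set xs. card {a H, b H})"
    unfolding U_def by (rule card_UN_le) simp
  also have "\<dots> \<le> (\<Sum>H \<in> set xs. 2)"
    by (intro sum_mono) (simp add: card_insert_le_m1)
  also have "\<dots> \<le> 2 * length xs"
    using card_length[of xs] by simp
  finally have "card U < card {..n}"
    using assms(3) by simp
  moreover have "finite U"
    by (simp add: U_def)
  ultimately have "\<not> {..n} \<subseteq> U"
    using card_mono[of U "{..n}"] by linarith
  then obtain k where k: "k \<le> n" "k \<notin> U"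
    by auto
  define s where "s = monomial_map (Suc n) (transpose k n) (\<lambda>_. 1)"
  have s: "s \<in> monomial_maps d (Suc n)"
    unfolding s_def using k(1) by (intro monomial_mapsI permutes_swap_id) auto
  have "s \<circ> s = id"
    using k(1) by (auto simp: s_def monomial_map_def fun_eq_iff transpose_def)
  then have s_image: "s ` H = s -` H" for H
    by (metis bij_vimage_eq_inv_image inv_unique_comp o_bij)
  have "s ` H \<in> arrangement d n" if H: "H \<in> set xs" for H
  proof -
    have "transpose k n ` {a H, b H} \<subseteq> {..<n}"
      using ab[OF H] k U_def H by (auto simp: transpose_def)
    moreover have "depends_only_on (transpose k n ` {a H, b H}) (s ` H)"
      unfolding s_image unfolding s_def using ab[OF H] by (intro depends_only_on_vimage_monomial_map) auto
    moreover have "s ` H \<in> arrangement d (Suc n)"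
      using H assms(2) image_monomial_map_arrangement_iff[OF assms(1) s] by blast
    ultimately show ?thesis
      using arrangement_iff_Suc[OF assms(1)] depends_only_on_mono by blast
  qed
  with s show ?thesis
    by (auto simp: reducing_maps_def)
qed

lemma natural_map_inj_on:
  assumes "1 \<le> d" "2 * r \<le> n"
  shows "inj_on (natural_map d n) (cohom d (Suc n) r)"
proof (rule inj_onI)
  fix c1 c2
  assume c1: "c1 \<in> cohom d (Suc n) r" and c2: "c2 \<in> cohom d (Suc n) r"
    and eq: "natural_map d n c1 = natural_map d n c2"
  show "c1 = c2"
  proof
    fix xs
    show "c1 xs = c2 xs"
    proof (cases "length xs = r \<and> set xs \<subseteq> arrangement d (Suc n)")
      case True
      then obtain g where g: "g \<in> reducing_maps d n (set xs)"
        using reducing_maps_nonempty[OF assms(1)] assms(2) by blast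
      then have g_mono: "g \<in> monomial_maps d (Suc n)"
        and g_into: "set (map ((`) g) xs) \<subseteq> arrangement d n"
        by (auto simp: reducing_maps_def)
      have "c1 xs = c1 (map ((`) g) xs)"
        using c1 g_mono assms(1) by (simp add: cohom_iff)
      also have "\<dots> = natural_map d n c1 (map ((`) g) xs)"
        using g_into by (simp add: natural_map_def)
      also have "\<dots> = c2 (map ((`) g) xs)"
        using eq g_into by (simp add: natural_map_def)
      also have "\<dots> = c2 xs"
        using c2 g_mono assms(1) by (simp add: cohom_iff)
      finally show ?thesis .
    next
      case False
      then have "c1 xs = 0" "c2 xs = 0"
        using cohom_support[OF c1, of xs] cohom_support[OF c2, of xs] by blast+
      then show ?thesis
        by simp
    qed
  qed
qed

theorem proposition3p21:
  fixes d r :: nat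
  assumes "d \<ge> 1"
  shows "(\<forall>n \<ge> 1. natural_map d n ` cohom d (Suc n) r = cohom d n r)
       \<and> (\<forall>n. n \<ge> 1 \<longrightarrow> n \<ge> 2 * r \<longrightarrow> bij_betw (natural_map d n) (cohom d (Suc n) r) (cohom d n r))"
proof -
  have onto: "natural_map d n ` cohom d (Suc n) r = cohom d n r" for n
  proof
    show "natural_map d n ` cohom d (Suc n) r \<subseteq> cohom d n r"
      using natural_map_in_cohom[OF assms] by blast
    show "cohom d n r \<subseteq> natural_map d n ` cohom d (Suc n) r"
      using natural_map_extend_cohom[OF assms] extend_cohom_in_cohom[OF assms] by (metis image_eqI subsetI)
  qed
  then show ?thesis
    using natural_map_inj_on[OF assms] by (simp add: bij_betw_def)
qed

end
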